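(* Let $A$ be a real $m\times m$ matrix, $f$ in the range of $A$, $y$ the minimal-norm solution of $Ay=f$ (so $y\perp\mathcal{N}(A)$). Fix $q\in(0,1)$, $C>1$, $\varepsilon\in(0,1)$. For each $\delta\in(0,1)$ let $f_\delta\in\mathbb{R}^m$ satisfy $\|f_\delta-f\|\le\delta$ and $\|f_\delta\|>C\delta^\varepsilon$. Define $u_1^\delta=0$, $u_{n+1}^\delta=q^nT_{q^n}^{-1}u_n^\delta+T_{q^n}^{-1}A^*f_\delta$ for $n\ge1$, and let $n_\delta$ be the smallest integer $n\ge1$ with $\|AT_{q^{n}}^{-1}A^*f_\delta-f_\delta\|\le C\delta^\varepsilon$. Then $$\lim_{\delta\to0}\|u_{n_\delta}^\delta-y\|=0.$$
   Context: $A^*$ is the transpose of $A$, $T:=A^*A$, $T_a:=T+aI$ for $a>0$; $\mathcal{N}(A)=\{u:Au=0\}$; $\|\cdot\|$ is the Euclidean norm. *)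

theory Defs
  imports "HOL-Analysis.Analysis"
begin

definition Tmat :: "real^'m^'m \<Rightarrow> real \<Rightarrow> real^'m^'m" where
  "Tmat A a = transpose A ** A + a *\<^sub>R mat 1"

definition min_norm_solution :: "real^'m^'m \<Rightarrow> real^'m \<Rightarrow> real^'m \<Rightarrow> bool" where
  "min_norm_solution A f y \<longleftrightarrow> A *v y = f \<and> (\<forall>z. A *v z = f \<longrightarrow> norm y \<le> norm z)"

text \<open>Iterates u_n (n \<ge> 1): u_1 = 0,
  u_(n+1) = q^n T_(q^n)^-1 u_n + T_(q^n)^-1 A^* g.  The value at index 0 is a dummy.\<close>
fun useq :: "real^'m^'m \<Rightarrow> real \<Rightarrow> real^'m \<Rightarrow> nat \<Rightarrow> real^'m" where
  "useq A q g 0 = 0"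
| "useq A q g (Suc 0) = 0"
| "useq A q g (Suc (Suc k)) =
     (q ^ Suc k) *\<^sub>R (matrix_inv (Tmat A (q ^ Suc k)) *v useq A q g (Suc k))
     + matrix_inv (Tmat A (q ^ Suc k)) *v (transpose A *v g)"

definition stop_index :: "real^'m^'m \<Rightarrow> real \<Rightarrow> real \<Rightarrow> real \<Rightarrow> real \<Rightarrow> real^'m \<Rightarrow> nat" where
  "stop_index A q C eps \<delta> g = (LEAST n. n \<ge> 1 \<and>
      norm (A *v (matrix_inv (Tmat A (q ^ n)) *v (transpose A *v g)) - g) \<le> C * \<delta> powr eps)"

end

theory Submission
  imports Defs
begin

(* Write T_a = A^T A + a I and u_n(g) for the iterates with data g.
   Instead of diagonalising A^T A, every spectral fact is derived from the
   identity  z . T_a z = |A z|^2 + a |z|^2 : it makes T_a invertible for a > 0,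
   and Cauchy-Schwarz turns it into the estimates we need for the solution z of
   T_a z = x.
   The theorem follows from |u_n(f_delta) - y| <= K delta + |u_n(f) - y|
   taken at n = n_delta. *)

section \<open>The regularised normal operator T_a\<close>

lemma inner_transpose: "(transpose A *v x) \<bullet> (y::real^'n) = x \<bullet> (A *v y)"
  by (simp add: dot_lmul_matrix)

lemma Tmat_apply: "Tmat A a *v z = transpose A *v (A *v z) + a *\<^sub>R (z::real^'m)"
proof -
  have "Tmat A a *v z = (transpose A ** A) *v z + (a *\<^sub>R mat 1) *v z"
    unfolding Tmat_def by (rule matrix_vector_mult_add_rdistrib)
  also have "(transpose A ** A) *v z = transpose A *v (A *v z)"
    by (rule matrix_vector_mul_assoc[symmetric])
  also have "(a *\<^sub>R mat 1) *v z = a *\<^sub>R z"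
    by (simp add: scaleR_matrix_vector_assoc[symmetric])
  finally show ?thesis .
qed

lemma Tmat_quadratic_form:
  "z \<bullet> (Tmat A a *v z) = (norm (A *v z))\<^sup>2 + a * (norm (z::real^'m))\<^sup>2"
proof -
  have "z \<bullet> (Tmat A a *v z) = z \<bullet> (transpose A *v (A *v z)) + a * (z \<bullet> z)"
    unfolding Tmat_apply by (simp only: inner_add_right inner_scaleR_right)
  also have "z \<bullet> (transpose A *v (A *v z)) = (A *v z) \<bullet> (A *v z)"
    by (metis inner_commute inner_transpose)
  finally show ?thesis by (simp only: power2_norm_eq_inner)
qed

lemma Tmat_injective: assumes "a > 0" shows "inj ((*v) (Tmat A a))"
proof (rule injI)
  fix x y assume "Tmat A a *v x = Tmat A a *v y"
  hence "Tmat A a *v (x - y) = 0" by (simp add: matrix_vector_mult_diff_distrib)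
  hence "(norm (A *v (x - y)))\<^sup>2 + a * (norm (x - y))\<^sup>2 = 0"
    using Tmat_quadratic_form[of "x - y" A a] by simp
  hence "a * (norm (x - y))\<^sup>2 = 0"
    using assms by (smt (verit) mult_nonneg_nonneg zero_le_power2)
  thus "x = y" using assms by simp
qed

lemma Tmat_invertible: assumes "a > 0" shows "invertible (Tmat A a)"
proof -
  obtain B where "B ** Tmat A a = mat 1"
    using Tmat_injective[OF assms] matrix_left_invertible_injective by blast
  moreover from this have "Tmat A a ** B = mat 1"
    using matrix_left_right_inverse[of B "Tmat A a"] by simp
  ultimately show ?thesis unfolding invertible_def by blast
qed

lemma matrix_inv_inverse:
  assumes "invertible M"
  shows "M ** matrix_inv M = mat 1" "matrix_inv M ** M = mat 1"
proof -
  have "\<exists>M'. M ** M' = mat 1 \<and> M' ** M = mat 1" using assms invertible_def by blast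
  hence "M ** matrix_inv M = mat 1 \<and> matrix_inv M ** M = mat 1"
    unfolding matrix_inv_def by (rule someI_ex)
  thus "M ** matrix_inv M = mat 1" "matrix_inv M ** M = mat 1" by auto
qed

lemma Tmat_inv_right:
  assumes "a > 0" shows "Tmat A a *v (matrix_inv (Tmat A a) *v x) = (x::real^'m)"
  by (simp add: matrix_vector_mul_assoc matrix_inv_inverse[OF Tmat_invertible[OF assms]])

lemma Tmat_inv_left:
  assumes "a > 0" shows "matrix_inv (Tmat A a) *v (Tmat A a *v x) = (x::real^'m)"
  by (simp add: matrix_vector_mul_assoc matrix_inv_inverse[OF Tmat_invertible[OF assms]])

lemma Tmat_inv_normal:
  assumes "a > 0"
  shows "matrix_inv (Tmat A a) *v (transpose A *v (A *v w))
           = w - a *\<^sub>R (matrix_inv (Tmat A a) *v (w::real^'m))"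
proof -
  let ?M = "matrix_inv (Tmat A a)"
  have "?M *v (transpose A *v (A *v w) + a *\<^sub>R w) = w"
    using Tmat_inv_left[OF assms, of A w] by (simp only: Tmat_apply)
  hence "?M *v (transpose A *v (A *v w)) + a *\<^sub>R (?M *v w) = w"
    by (simp only: matrix_vector_right_distrib matrix_vector_mult_scaleR)
  thus ?thesis by (simp add: algebra_simps del: transpose_matrix_vector)
qed

(* T_a^{-1} A^T = A^T (A A^T + a I)^{-1}, so the range of A^T is T_a^{-1}-invariant. *)
lemma Tmat_inv_transpose:
  assumes "a > 0"
  shows "matrix_inv (Tmat A a) *v (transpose A *v v)
           = transpose A *v (matrix_inv (Tmat (transpose A) a) *v v)"
proof -
  let ?w = "matrix_inv (Tmat (transpose A) a) *v v"
  have "A *v (transpose A *v ?w) + a *\<^sub>R ?w = v"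
    using Tmat_inv_right[OF assms, of "transpose A" v]
    by (simp add: Tmat_apply del: transpose_matrix_vector)
  hence "Tmat A a *v (transpose A *v ?w) = transpose A *v v"
    by (metis Tmat_apply matrix_vector_mult_scaleR matrix_vector_right_distrib)
  thus ?thesis by (metis Tmat_inv_left[OF assms])
qed

section \<open>Estimates for solutions of T_a z = x\<close>

lemma product_le_square_plus_quarter: "(x::real) * y \<le> x\<^sup>2 + y\<^sup>2 / 4"
proof -
  have "0 \<le> (x - y/2)\<^sup>2" by simp
  thus ?thesis by (simp add: power2_eq_square algebra_simps)
qed

lemma norm_add_scaleR_squared:
  "(norm (u + c *\<^sub>R z))\<^sup>2 = (norm u)\<^sup>2 + 2*c*(u \<bullet> z) + c\<^sup>2*(norm (z::'a::real_inner))\<^sup>2"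
  unfolding power2_norm_eq_inner inner_add_left inner_add_right inner_scaleR_left
    inner_scaleR_right inner_commute[of z u]
  by (simp add: power2_eq_square distrib_left)

lemma inner_normal_self: "(transpose A *v (A *v z)) \<bullet> z = (norm (A *v (z::real^'m)))\<^sup>2"
  unfolding power2_norm_eq_inner by (rule inner_transpose)

lemma Tmat_solution_norm:
  assumes "a > 0" "Tmat A a *v z = x" shows "a * norm z \<le> norm (x::real^'m)"
proof -
  let ?B = "transpose A *v (A *v z)"
  have "(norm x)\<^sup>2 = (norm ?B)\<^sup>2 + 2 * a * (?B \<bullet> z) + a\<^sup>2 * (norm z)\<^sup>2"
    unfolding assms(2)[symmetric] Tmat_apply by (rule norm_add_scaleR_squared)
  moreover have "0 \<le> 2 * a * (?B \<bullet> z)" unfolding inner_normal_self using assms(1) by simp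
  ultimately have "(a * norm z)\<^sup>2 \<le> (norm x)\<^sup>2" by (simp add: power_mult_distrib)
  thus ?thesis by (rule power2_le_imp_le[OF _ norm_ge_zero])
qed

lemma Tmat_solution_range_norm:
  assumes "a > 0" "Tmat A a *v z = transpose A *v v"
  shows "a * (norm z)\<^sup>2 \<le> (norm (v::real^'m))\<^sup>2 / 4"
proof -
  have "(norm (A *v z))\<^sup>2 + a * (norm z)\<^sup>2 = z \<bullet> (transpose A *v v)"
    using Tmat_quadratic_form[of z A a] assms(2) by metis
  also have "\<dots> = (A *v z) \<bullet> v" by (metis inner_commute inner_transpose)
  also have "\<dots> \<le> norm (A *v z) * norm v" by (rule norm_cauchy_schwarz)
  also have "\<dots> \<le> (norm (A *v z))\<^sup>2 + (norm v)\<^sup>2 / 4" by (rule product_le_square_plus_quarter)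
  finally show ?thesis by linarith
qed

lemma Tmat_solution_image_norm:
  assumes "a > 0" "Tmat A a *v z = w"
  shows "a * (norm (A *v z))\<^sup>2 \<le> (norm (w::real^'m))\<^sup>2 / 4"
proof -
  let ?B = "transpose A *v (A *v z)"
  have "?B \<bullet> w = ?B \<bullet> ?B + a * (?B \<bullet> z)"
    unfolding assms(2)[symmetric] Tmat_apply by (simp only: inner_add_right inner_scaleR_right)
  hence "(norm ?B)\<^sup>2 + a * (norm (A *v z))\<^sup>2 = ?B \<bullet> w"
    unfolding inner_normal_self power2_norm_eq_inner[of ?B] by simp
  also have "\<dots> \<le> norm ?B * norm w" by (rule norm_cauchy_schwarz)
  also have "\<dots> \<le> (norm ?B)\<^sup>2 + (norm w)\<^sup>2 / 4" by (rule product_le_square_plus_quarter)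
  finally show ?thesis by linarith
qed

lemma Tmat_solution_residual:
  assumes "a > 0" "Tmat A a *v z = transpose A *v d"
  shows "norm (A *v z - d) \<le> norm (d::real^'m)"
proof -
  let ?r = "d - A *v z"
  have "transpose A *v ?r = transpose A *v d - transpose A *v (A *v z)"
    by (rule matrix_vector_mult_diff_distrib)
  also have "\<dots> = a *\<^sub>R z"
    using assms(2) Tmat_apply[of A a z] by (metis add_diff_cancel_left')
  finally have "transpose A *v ?r = a *\<^sub>R z" .
  hence "?r \<bullet> (A *v z) = a * (norm z)\<^sup>2"
    by (metis inner_transpose inner_scaleR_left power2_norm_eq_inner)
  moreover have "(norm d)\<^sup>2 = (norm ?r)\<^sup>2 + 2 * 1 * (?r \<bullet> (A *v z)) + 1\<^sup>2 * (norm (A *v z))\<^sup>2"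
    using norm_add_scaleR_squared[of ?r 1 "A *v z"] by simp
  ultimately have "(norm ?r)\<^sup>2 \<le> (norm d)\<^sup>2" using assms(1) by simp
  hence "norm ?r \<le> norm d" by (rule power2_le_imp_le[OF _ norm_ge_zero])
  thus ?thesis by (simp add: norm_minus_commute)
qed

section \<open>The iterates\<close>

lemma useq_add: "useq A q (g + h) n = useq A q g n + useq A q h n"
  by (induction A q g n rule: useq.induct)
     (simp_all add: algebra_simps matrix_vector_right_distrib del: transpose_matrix_vector)

lemma useq_scaleR: "useq A q (c *\<^sub>R g) n = c *\<^sub>R useq A q g n"
  by (induction A q g n rule: useq.induct)
     (simp_all add: algebra_simps del: transpose_matrix_vector)

lemma useq_linear: "linear (\<lambda>g. useq A q g n)"
  by (rule linearI) (simp_all add: useq_add useq_scaleR)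

lemma useq_error_step:
  assumes "0 < q" "transpose A *v g = transpose A *v (A *v w)"
  shows "useq A q g (Suc (Suc k)) - w
     = q^Suc k *\<^sub>R (matrix_inv (Tmat A (q^Suc k)) *v (useq A q g (Suc k) - w))"
proof -
  have a: "q^Suc k > 0" using assms(1) by simp
  show ?thesis
    unfolding useq.simps assms(2) Tmat_inv_normal[OF a]
    by (simp add: matrix_vector_mult_diff_distrib scaleR_diff_right del: transpose_matrix_vector)
qed

(* Since |a T_a^{-1}| <= 1 the error never exceeds the initial error |w|. *)
lemma useq_error_bound:
  assumes "0 < q" "transpose A *v g = transpose A *v (A *v w)"
  shows "norm (useq A q g n - w) \<le> norm w"
proof -
  have "norm (useq A q g (Suc k) - w) \<le> norm w" for k
  proof (induction k)
    case 0 then show ?case by simp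
  next
    case (Suc k)
    let ?a = "q^Suc k" and ?x = "useq A q g (Suc k) - w"
    have a: "?a > 0" using assms(1) by simp
    have "?a * norm (matrix_inv (Tmat A ?a) *v ?x) \<le> norm ?x"
      by (rule Tmat_solution_norm[OF a Tmat_inv_right[OF a]])
    also have "\<dots> \<le> norm w" by (rule Suc.IH)
    finally show ?case unfolding useq_error_step[OF assms] using a by simp
  qed
  thus ?thesis by (cases n) auto
qed

lemma useq_error_in_range:
  assumes "0 < q" "transpose A *v g = transpose A *v (A *v w)" "w = transpose A *v v"
  shows "\<exists>v'. useq A q g (Suc k) - w = transpose A *v v' \<and> norm v' \<le> norm v"
proof (induction k)
  case 0
  have "transpose A *v (- v) = - w"
    using assms(3) matrix_vector_mult_diff_distrib[of "transpose A" 0 v]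
    by (simp del: transpose_matrix_vector)
  thus ?case by (intro exI[of _ "- v"]) simp
next
  case (Suc k)
  then obtain v' where v': "useq A q g (Suc k) - w = transpose A *v v'" "norm v' \<le> norm v"
    by blast
  let ?a = "q^Suc k" let ?M' = "matrix_inv (Tmat (transpose A) ?a)"
  have a: "?a > 0" using assms(1) by simp
  have "useq A q g (Suc (Suc k)) - w = transpose A *v (?a *\<^sub>R (?M' *v v'))"
    unfolding useq_error_step[OF assms(1,2)] v'(1) Tmat_inv_transpose[OF a]
    by (simp add: matrix_vector_mult_scaleR del: transpose_matrix_vector)
  moreover have "?a * norm (?M' *v v') \<le> norm v'"
    by (rule Tmat_solution_norm[OF a Tmat_inv_right[OF a]])
  ultimately show ?case using v'(2) a by (intro exI[of _ "?a *\<^sub>R (?M' *v v')"]) simp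
qed

lemma useq_error_rate:
  assumes "0 < q" "transpose A *v g = transpose A *v (A *v w)" "w = transpose A *v v"
  shows "(norm (useq A q g (Suc (Suc k)) - w))\<^sup>2 \<le> q^Suc k * ((norm v)\<^sup>2 / 4)"
proof -
  obtain v' where v': "useq A q g (Suc k) - w = transpose A *v v'" "norm v' \<le> norm v"
    using useq_error_in_range[OF assms] by blast
  let ?a = "q^Suc k" let ?z = "matrix_inv (Tmat A ?a) *v (transpose A *v v')"
  have a: "?a > 0" using assms(1) by simp
  have "?a * (norm ?z)\<^sup>2 \<le> (norm v')\<^sup>2 / 4"
    by (rule Tmat_solution_range_norm[OF a Tmat_inv_right[OF a]])
  also have "\<dots> \<le> (norm v)\<^sup>2 / 4" using v'(2) by (simp add: power_mono)
  finally have *: "?a * (norm ?z)\<^sup>2 \<le> (norm v)\<^sup>2 / 4" .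
  have "(norm (useq A q g (Suc (Suc k)) - w))\<^sup>2 = ?a * (?a * (norm ?z)\<^sup>2)"
    unfolding useq_error_step[OF assms(1,2)] v'(1) using a
    by (simp add: power2_eq_square del: transpose_matrix_vector)
  also have "\<dots> \<le> ?a * ((norm v)\<^sup>2 / 4)" using a * by (intro mult_left_mono) simp_all
  finally show ?thesis .
qed

lemma useq_exact_limit:
  assumes "0 < q" "q < 1" "transpose A *v g = transpose A *v (A *v w)" "w = transpose A *v v"
  shows "(\<lambda>n. useq A q g n) \<longlonglongrightarrow> w"
proof -
  have rate: "(\<lambda>k. q^Suc k * ((norm v)\<^sup>2 / 4)) \<longlonglongrightarrow> 0"
    using assms(1,2) by (intro tendsto_mult_left_zero LIMSEQ_Suc LIMSEQ_power_zero) simp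
  have below: "\<forall>\<^sub>F k in sequentially.
      (norm (useq A q g (Suc (Suc k)) - w))\<^sup>2 \<le> q^Suc k * ((norm v)\<^sup>2 / 4)"
    using useq_error_rate[OF assms(1,3,4)] by (intro always_eventually allI)
  have "(\<lambda>k. (norm (useq A q g (Suc (Suc k)) - w))\<^sup>2) \<longlonglongrightarrow> 0"
    by (rule tendsto_sandwich[OF _ below tendsto_const rate]) simp
  hence "(\<lambda>k. sqrt ((norm (useq A q g (Suc (Suc k)) - w))\<^sup>2)) \<longlonglongrightarrow> sqrt 0"
    by (rule tendsto_real_sqrt)
  hence "(\<lambda>k. norm (useq A q g (k + 2) - w)) \<longlonglongrightarrow> 0" by simp
  hence "(\<lambda>k. useq A q g (k + 2) - w) \<longlonglongrightarrow> 0" by (simp only: tendsto_norm_zero_iff)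
  hence "(\<lambda>k. useq A q g (k + 2)) \<longlonglongrightarrow> w" by (simp only: Lim_null[symmetric])
  thus ?thesis by (rule LIMSEQ_offset)
qed

section \<open>Orthogonal decomposition along the range of A\<close>

lemma range_orthogonal_decomposition:
  fixes M :: "real^'n^'m"
  obtains w r where "h = M *v w + r" "\<And>x. r \<bullet> (M *v x) = 0"
proof -
  have range: "span (range ((*v) M)) = range ((*v) M)"
    using linear_subspace_image[OF matrix_vector_mul_linear subspace_UNIV] by simp
  obtain p r where p: "p \<in> span (range ((*v) M))" and h: "h = p + r"
    and r: "\<And>u. u \<in> span (range ((*v) M)) \<Longrightarrow> orthogonal r u"
    using orthogonal_subspace_decomp_exists[of "range ((*v) M)" h] by blast
  from p range obtain w where "p = M *v w" by auto
  moreover have "r \<bullet> (M *v x) = 0" for x using r[of "M *v x"] range by (simp add: orthogonal_def)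
  ultimately show ?thesis using that h by blast
qed

lemma orthogonal_range_kernel_transpose:
  assumes "\<And>x. r \<bullet> (A *v x) = 0" shows "transpose A *v r = (0::real^'n)"
proof -
  have "(transpose A *v r) \<bullet> (transpose A *v r) = r \<bullet> (A *v (transpose A *v r))"
    by (rule inner_transpose)
  also have "\<dots> = 0" by (rule assms)
  finally show ?thesis by simp
qed

lemma normal_equation_solvable:
  fixes A :: "real^'m^'m"
  obtains w r where "g = A *v w + r" "transpose A *v r = 0"
    "transpose A *v g = transpose A *v (A *v w)"
proof -
  obtain w r where g: "g = A *v w + r" and "\<And>x. r \<bullet> (A *v x) = 0"
    using range_orthogonal_decomposition by blast
  hence "transpose A *v r = 0" using orthogonal_range_kernel_transpose by blast
  moreover from this have "transpose A *v g = transpose A *v (A *v w)"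
    unfolding g by (simp add: matrix_vector_right_distrib del: transpose_matrix_vector)
  ultimately show ?thesis using that g by blast
qed

lemma min_norm_solution_in_range_transpose:
  fixes A :: "real^'m^'m"
  assumes "min_norm_solution A f y" shows "\<exists>v. y = transpose A *v v"
proof -
  obtain v z where yz: "y = transpose A *v v + z" and z: "\<And>x. z \<bullet> (transpose A *v x) = 0"
    using range_orthogonal_decomposition[of y "transpose A"] by blast
  have "A *v z = 0"
    using orthogonal_range_kernel_transpose[of z "transpose A"] z by simp
  hence "A *v (transpose A *v v) = A *v y"
    unfolding yz by (simp add: matrix_vector_right_distrib del: transpose_matrix_vector)
  hence le: "norm y \<le> norm (transpose A *v v)"
    using assms unfolding min_norm_solution_def by metis
  have "orthogonal (transpose A *v v) z"
    using z[of v] by (simp add: orthogonal_def inner_commute del: transpose_matrix_vector)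
  hence "(norm y)\<^sup>2 = (norm (transpose A *v v))\<^sup>2 + (norm z)\<^sup>2"
    unfolding yz by (rule norm_add_Pythagorean)
  with le have "(norm z)\<^sup>2 \<le> 0" by (smt (verit) norm_ge_zero power_mono)
  thus ?thesis using yz by (intro exI[of _ v]) simp
qed

section \<open>Stability of the iterates with respect to the data\<close>

lemma useq_uniformly_bounded:
  fixes A :: "real^'m^'m" assumes "0 < q"
  obtains K where "K \<ge> 0" "\<And>n g. norm (useq A q g n) \<le> K * norm g"
proof -
  have "\<exists>w. transpose A *v axis i 1 = transpose A *v (A *v w)" for i
    by (metis normal_equation_solvable)
  then obtain W where W: "\<And>i. transpose A *v axis i 1 = transpose A *v (A *v W i)" by metis
  define K where "K = (\<Sum>i\<in>UNIV. 2 * norm (W i))"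
  have basis: "norm (useq A q (axis i 1) n) \<le> 2 * norm (W i)" for i n
    using useq_error_bound[OF assms W, of i n] norm_triangle_sub[of "useq A q (axis i 1) n" "W i"]
    by linarith
  have "norm (useq A q g n) \<le> K * norm g" for n g
  proof -
    have "useq A q g n = (\<Sum>i\<in>UNIV. g$i *\<^sub>R useq A q (axis i 1) n)"
      using linear_sum[OF useq_linear] useq_scaleR basis_expansion[of g]
      by (metis (no_types, lifting) scalar_mult_eq_scaleR sum.cong)
    hence "norm (useq A q g n) \<le> (\<Sum>i\<in>UNIV. \<bar>g$i\<bar> * norm (useq A q (axis i 1) n))"
      by (metis (no_types, lifting) norm_scaleR norm_sum sum.cong)
    also have "\<dots> \<le> (\<Sum>i\<in>UNIV. norm g * (2 * norm (W i)))"
      by (intro sum_mono mult_mono component_le_norm_cart basis) simp_all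
    also have "\<dots> = K * norm g" unfolding K_def by (simp add: sum_distrib_left mult.commute)
    finally show ?thesis .
  qed
  moreover have "K \<ge> 0" unfolding K_def by (simp add: sum_nonneg)
  ultimately show ?thesis using that by blast
qed

section \<open>The discrepancy residual\<close>

definition residual :: "real^'m^'m \<Rightarrow> real \<Rightarrow> real^'m \<Rightarrow> real^'m" where
  "residual A a g = A *v (matrix_inv (Tmat A a) *v (transpose A *v g)) - g"

lemma stop_index_residual:
  "stop_index A q C eps \<delta> g = (LEAST n. n \<ge> 1 \<and> norm (residual A (q ^ n) g) \<le> C * \<delta> powr eps)"
  unfolding stop_index_def residual_def by (rule refl)

lemma residual_diff: "residual A a g - residual A a h = residual A a (g - h)"
  unfolding residual_def by (simp add: matrix_vector_mult_diff_distrib del: transpose_matrix_vector)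

lemma residual_nonexpansive: assumes "a > 0" shows "norm (residual A a d) \<le> norm d"
  unfolding residual_def by (rule Tmat_solution_residual[OF assms Tmat_inv_right[OF assms]])

(* For g <> 0 the residual is never 0: A z = g would force a z = 0, hence g = 0. *)
lemma residual_nonzero: assumes "a > 0" "g \<noteq> 0" shows "residual A a g \<noteq> 0"
proof
  assume "residual A a g = 0"
  let ?z = "matrix_inv (Tmat A a) *v (transpose A *v g)"
  have Az: "A *v ?z = g" using \<open>residual A a g = 0\<close> unfolding residual_def by simp
  have "transpose A *v g + a *\<^sub>R ?z = transpose A *v g"
    using Tmat_inv_right[OF assms(1), of A "transpose A *v g"] unfolding Tmat_apply Az .
  hence "?z = 0" using assms(1) by simp
  thus False using Az assms(2) by simp
qed

lemma residual_offset_bound: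
  assumes "a > 0" "g = A *v w + r" "transpose A *v r = 0"
  shows "(norm (residual A a g + r))\<^sup>2 \<le> a * ((norm (w::real^'m))\<^sup>2 / 4)"
proof -
  let ?z = "matrix_inv (Tmat A a) *v w"
  have normal: "transpose A *v g = transpose A *v (A *v w)"
    using assms(2,3) by (simp add: matrix_vector_right_distrib del: transpose_matrix_vector)
  have "residual A a g + r = - (a *\<^sub>R (A *v ?z))"
    unfolding residual_def normal Tmat_inv_normal[OF assms(1)] using assms(2)
    by (simp add: matrix_vector_mult_diff_distrib matrix_vector_mult_scaleR
        del: transpose_matrix_vector)
  hence "(norm (residual A a g + r))\<^sup>2 = a * (a * (norm (A *v ?z))\<^sup>2)"
    using assms(1) by (simp add: power_mult_distrib power2_eq_square)
  also have "\<dots> \<le> a * ((norm w)\<^sup>2 / 4)"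
    using Tmat_solution_image_norm[OF assms(1) Tmat_inv_right[OF assms(1)]] assms(1)
    by (intro mult_left_mono) simp_all
  finally show ?thesis .
qed

lemma residual_eventually_below:
  fixes A :: "real^'m^'m"
  assumes "0 < q" "q < 1" "f = A *v x" "norm (g - f) < B"
  shows "\<exists>n\<ge>1. norm (residual A (q^n) g) \<le> B"
proof -
  obtain w r where g: "g = A *v w + r" and r: "transpose A *v r = 0"
    using normal_equation_solvable by blast
  have "orthogonal (A *v (w - x)) r"
    using inner_transpose[of A r "w - x"] r by (simp add: orthogonal_def inner_commute)
  moreover have "g - f = A *v (w - x) + r"
    using g assms(3) by (simp add: matrix_vector_mult_diff_distrib)
  ultimately have "(norm (g - f))\<^sup>2 = (norm (A *v (w - x)))\<^sup>2 + (norm r)\<^sup>2"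
    by (simp add: norm_add_Pythagorean)
  hence "norm r \<le> norm (g - f)" by (smt (verit) norm_ge_zero power2_le_imp_le zero_le_power2)
  hence D: "B - norm r > 0" using assms(4) by simp
  have "(\<lambda>n. q^n * ((norm w)\<^sup>2/4)) \<longlonglongrightarrow> 0"
    using assms(1,2) by (intro tendsto_mult_left_zero LIMSEQ_power_zero) simp
  moreover have "0 < (B - norm r)\<^sup>2" using D by simp
  ultimately have "\<forall>\<^sub>F n in sequentially. q^n * ((norm w)\<^sup>2/4) < (B - norm r)\<^sup>2"
    by (rule order_tendstoD(2))
  then obtain N where "\<forall>n\<ge>N. q^n * ((norm w)\<^sup>2/4) < (B - norm r)\<^sup>2"
    unfolding eventually_sequentially by blast
  then obtain n where n: "n \<ge> 1" "q^n * ((norm w)\<^sup>2/4) < (B - norm r)\<^sup>2"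
    using le_add2[of 1 N] le_add1[of N 1] by blast
  have "(norm (residual A (q^n) g + r))\<^sup>2 < (B - norm r)\<^sup>2"
    using residual_offset_bound[OF _ g r, of "q^n"] assms(1) n(2) by simp
  hence "norm (residual A (q^n) g + r) < B - norm r"
    using D by (simp add: power_less_imp_less_base)
  moreover have "norm (residual A (q^n) g) \<le> norm (residual A (q^n) g + r) + norm r"
    using norm_triangle_ineq4[of "residual A (q^n) g + r" r] by simp
  ultimately have "norm (residual A (q^n) g) \<le> B" by linarith
  thus ?thesis using n(1) by blast
qed

(* If the data error is below the threshold, the stopping index meets the
   discrepancy criterion (the set in its LEAST-definition is nonempty). *)
lemma stop_index_discrepancy:
  fixes A :: "real^'m^'m"
  assumes "0 < q" "q < 1" "f = A *v x" "norm (g - f) < C * \<delta> powr eps"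
  shows "norm (residual A (q ^ stop_index A q C eps \<delta> g) g) \<le> C * \<delta> powr eps"
proof -
  have "\<exists>n. n \<ge> 1 \<and> norm (residual A (q^n) g) \<le> C * \<delta> powr eps"
    using residual_eventually_below[OF assms] by blast
  from LeastI_ex[OF this] show ?thesis unfolding stop_index_residual by blast
qed

(* Discrepancy principle with vanishing noise: for f <> 0 the stopping index
   tends to infinity, since each fixed residual of f is bounded away from 0
   while the residual at the stopping index, up to the data error, is not. *)
lemma stopping_index_to_infinity:
  fixes A :: "real^'m^'m" and g :: "'b \<Rightarrow> real^'m" and n :: "'b \<Rightarrow> nat"
  assumes "0 < q" "f \<noteq> 0"
    and "(e \<longlongrightarrow> 0) F" "\<forall>\<^sub>F x in F. norm (g x - f) \<le> e x"
    and "(\<theta> \<longlongrightarrow> 0) F" "\<forall>\<^sub>F x in F. norm (residual A (q ^ n x) (g x)) \<le> \<theta> x"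
  shows "filterlim n at_top F"
  unfolding filterlim_at_top
proof
  fix N :: nat
  have lim: "((\<lambda>x. e x + \<theta> x) \<longlongrightarrow> 0) F" using tendsto_add[OF assms(3,5)] by simp
  have "\<forall>\<^sub>F x in F. \<forall>k\<in>{..<N}. e x + \<theta> x < norm (residual A (q^k) f)"
  proof (rule eventually_ball_finite[OF finite_lessThan], rule ballI)
    fix k
    have "0 < norm (residual A (q^k) f)" using residual_nonzero[of "q^k" f A] assms(1,2) by simp
    thus "\<forall>\<^sub>F x in F. e x + \<theta> x < norm (residual A (q^k) f)" by (rule order_tendstoD(2)[OF lim])
  qed
  thus "\<forall>\<^sub>F x in F. N \<le> n x" using assms(4,6)
  proof eventually_elim
    case (elim x)
    have "residual A (q ^ n x) f = residual A (q ^ n x) (g x) - residual A (q ^ n x) (g x - f)"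
      by (simp add: residual_diff[symmetric])
    hence "norm (residual A (q ^ n x) f)
        \<le> norm (residual A (q ^ n x) (g x)) + norm (residual A (q ^ n x) (g x - f))"
      by (simp only: norm_triangle_ineq4)
    moreover have "norm (residual A (q ^ n x) (g x - f)) \<le> norm (g x - f)"
      using assms(1) by (intro residual_nonexpansive) simp
    ultimately have "norm (residual A (q ^ n x) f) \<le> e x + \<theta> x" using elim by linarith
    thus "N \<le> n x" using elim(1) by (meson lessThan_iff not_le not_less)
  qed
qed

lemma noise_below_threshold:
  fixes C eps \<delta> :: real
  assumes "1 < C" "eps \<le> 1" "0 < \<delta>" "\<delta> < 1" shows "\<delta> < C * \<delta> powr eps"
proof -
  have "\<delta> = \<delta> powr 1" using assms(3) by simp
  also have "\<dots> \<le> \<delta> powr eps" using assms by (intro powr_mono') simp_all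
  also have "\<dots> < C * \<delta> powr eps" using assms(1,3) by simp
  finally show ?thesis .
qed

lemma threshold_tendsto_zero:
  assumes "0 < eps" shows "((\<lambda>\<delta>::real. C * \<delta> powr eps) \<longlongrightarrow> 0) (at_right 0)"
proof -
  have "((\<lambda>\<delta>::real. \<delta> powr eps) \<longlongrightarrow> 0) (at_right 0)"
    by (rule tendsto_zero_powrI[OF tendsto_ident_at tendsto_const _ assms])
       (use eventually_at_right_less in \<open>rule eventually_mono, simp\<close>)
  thus ?thesis by (rule tendsto_mult_right_zero)
qed

section \<open>Convergence of the stopped iteration\<close>

(* Stability plus convergence for exact data: if the stopping index tends to
   infinity and the data error vanishes, the stopped iterates converge to the
   source-wise representable solution w. *)
lemma stopped_iterates_converge:
  fixes A :: "real^'m^'m" and g :: "'b \<Rightarrow> real^'m" and n :: "'b \<Rightarrow> nat"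
  assumes "0 < q" "q < 1" "transpose A *v f = transpose A *v (A *v w)" "w = transpose A *v v"
    and "filterlim n at_top F"
    and "(e \<longlongrightarrow> 0) F" "\<forall>\<^sub>F x in F. norm (g x - f) \<le> e x"
  shows "((\<lambda>x. useq A q (g x) (n x)) \<longlongrightarrow> w) F"
proof -
  obtain K where K: "K \<ge> 0" "\<And>n g. norm (useq A q g n) \<le> K * norm g"
    using useq_uniformly_bounded[OF assms(1)] by blast
  have "((\<lambda>x. useq A q f (n x)) \<longlongrightarrow> w) F"
    by (rule filterlim_compose[OF useq_exact_limit[OF assms(1-4)] assms(5)])
  hence exact: "((\<lambda>x. norm (useq A q f (n x) - w)) \<longlongrightarrow> 0) F"
    unfolding tendsto_norm_zero_iff by (rule LIM_zero)
  have "\<forall>\<^sub>F x in F. norm (useq A q (g x) (n x) - w) \<le> K * e x + norm (useq A q f (n x) - w)"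
    using assms(7)
  proof eventually_elim
    case (elim x)
    have "norm (useq A q (g x - f) (n x)) \<le> K * e x"
      using K(2)[of "g x - f" "n x"] mult_left_mono[OF elim K(1)] by linarith
    thus ?case using norm_triangle_ineq[of "useq A q (g x - f) (n x)" "useq A q f (n x) - w"]
      by (simp add: linear_diff[OF useq_linear])
  qed
  moreover have "((\<lambda>x. K * e x + norm (useq A q f (n x) - w)) \<longlongrightarrow> 0) F"
    using tendsto_add[OF tendsto_mult_right_zero[OF assms(6)] exact] by simp
  ultimately have "((\<lambda>x. useq A q (g x) (n x) - w) \<longlongrightarrow> 0) F"
    by (rule Lim_null_comparison)
  thus ?thesis by (rule LIM_zero_cancel)
qed

theorem theorem3p6:
  fixes A :: "real^'m^'m" and f y :: "real^'m" and q C eps :: real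
    and fd :: "real \<Rightarrow> real^'m"
  assumes "f \<in> range (\<lambda>x. A *v x)"
    and "min_norm_solution A f y"
    and "0 < q" "q < 1" "1 < C" "0 < eps" "eps < 1"
    and "\<And>\<delta>. 0 < \<delta> \<Longrightarrow> \<delta> < 1 \<Longrightarrow> norm (fd \<delta> - f) \<le> \<delta>"
    and "\<And>\<delta>. 0 < \<delta> \<Longrightarrow> \<delta> < 1 \<Longrightarrow> norm (fd \<delta>) > C * \<delta> powr eps"
  shows "((\<lambda>\<delta>. norm (useq A q (fd \<delta>) (stop_index A q C eps \<delta> (fd \<delta>)) - y)) \<longlongrightarrow> 0)
           (at_right 0)"
proof -
  obtain x where f: "f = A *v x" using assms(1) by auto
  obtain v where y: "y = transpose A *v v"
    using min_norm_solution_in_range_transpose[OF assms(2)] by blast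
  have normal: "transpose A *v f = transpose A *v (A *v y)"
    using assms(2) unfolding min_norm_solution_def by simp
  define n where "n \<delta> = stop_index A q C eps \<delta> (fd \<delta>)" for \<delta>
  have below: "\<delta> < C * \<delta> powr eps" if "0 < \<delta>" "\<delta> < 1" for \<delta>
    using noise_below_threshold[OF assms(5) _ that] assms(7) by simp
  have small: "\<forall>\<^sub>F \<delta> in at_right 0. 0 < \<delta> \<and> \<delta> < (1::real)"
    unfolding eventually_at_right_field by (intro exI[of _ 1]) auto
  have noise: "\<forall>\<^sub>F \<delta> in at_right 0. norm (fd \<delta> - f) \<le> \<delta>"
    using small by eventually_elim (simp add: assms(8))
  have discrepancy: "\<forall>\<^sub>F \<delta> in at_right 0. norm (residual A (q ^ n \<delta>) (fd \<delta>)) \<le> C * \<delta> powr eps"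
    using small unfolding n_def
    by eventually_elim (meson stop_index_discrepancy[OF assms(3,4) f] assms(8) below le_less_trans)
  have "f \<noteq> 0" (* f_delta lies above the threshold, while f is within delta of it *)
    using assms(8,9)[of "1/2"] below[of "1/2"] by auto
  hence "filterlim n at_top (at_right 0)"
    by (rule stopping_index_to_infinity[OF assms(3) _ tendsto_ident_at noise
          threshold_tendsto_zero[OF assms(6)] discrepancy])
  hence "((\<lambda>\<delta>. useq A q (fd \<delta>) (n \<delta>)) \<longlongrightarrow> y) (at_right 0)"
    by (rule stopped_iterates_converge[OF assms(3,4) normal y _ tendsto_ident_at noise])
  thus ?thesis using LIM_zero unfolding n_def tendsto_norm_zero_iff by blast
qed

end
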